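(* Let $P_1,\dots,P_m$ be nonzero univariate complex polynomials of degrees $k_1,\dots,k_m\ge1$. Then $$\|P_1\|\cdots\|P_m\|\le\min\Big\{\sqrt{\frac{(k_1+\dots+k_m)!}{k_1!\cdots k_m!}},\ \sqrt{\frac{e^{k_1+\dots+k_m}}{k_1+\dots+k_m+1}}\Big\}\,\|P_1\cdots P_m\|,$$ where $\|\cdot\|$ is the Bombieri–Weyl norm.
   Context: The Bombieri–Weyl norm of a univariate polynomial $P(z)=\sum_{i=0}^k a_iz^i$ of degree $k$ is $\|P\|=(\sum_{i=0}^k\binom{k}{i}^{-1}|a_i|^2)^{1/2}$, i.e. the norm of its homogenization $\sum a_ix^iy^{k-i}$. *)

theory Defs
  imports "HOL-Analysis.Analysis" "HOL-Computational_Algebra.Polynomial"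
begin

definition bw_norm :: "complex poly \<Rightarrow> real" where
  "bw_norm P = sqrt (\<Sum>i\<le>degree P. (cmod (coeff P i))\<^sup>2 / real (degree P choose i))"

end

theory Submission
  imports Defs "HOL-Real_Asymp.Real_Asymp" "HOL-Computational_Algebra.Fundamental_Theorem_Algebra"
begin

text \<open>
  A polynomial of degree k is read as the binary form of degree k obtained by homogenisation.

  The first bound is Bombieri's inequality, proved as by Beauzamy, Bombieri, Enflo and Montgomery.
  For the Fock inner product (k! times the Bombieri--Weyl one) the partial derivatives in x and y
  are adjoint to multiplication by x and y. The sums, over all iterated partial derivatives
  D, E of orders i and j, of the inner products of D p * E q with E p * D q therefore satisfy a
  recursion in i and j showing that they are all nonnegative. For i = j = 0 the sum is the squared
  norm of p q, and one step of the recursion together with Euler's identity for p gives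
  <p, p> <q, q> \<le> <pq, pq> by induction on the degree of p.

  For the second bound factor the product as c times the product of x - r over its n roots r, and
  compare both sides with K = |c|^2 * prod (1 + |r|^2). Multiplying by x - r multiplies the squared
  norm by at most 1 + |r|^2, so the product of the squared norms of the factors is at most K.
  Conversely the squared norm of a polynomial of degree n, divided by n + 1, is the integral over
  [0, 1] of sum |a_i|^2 t^i (1 - t)^(n - i). A Landau-type inequality bounds this integrand below by
  |c|^2 * prod max(t, (1 - t) |r|^2), and Jensen's inequality for exp bounds the integral of that
  product below by |c|^2 * prod ((1 + |r|^2) / e) = e^(-n) K.
\<close>

section \<open>Partial derivatives of binary forms\<close>

text \<open>
  A polynomial f with \<open>degree f \<le> d\<close> stands for the form \<open>y\<^sup>d f(x/y)\<close> of degree d. Then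
  \<open>pderiv f\<close> and \<open>ypderiv d f\<close> are its partial derivatives in x and y, \<open>hmult True\<close> and
  \<open>hmult False\<close> are multiplication by x and y, and \<open>hpderivs w d f\<close> applies the partial
  derivatives listed in the word w (True for x), the last letter first.
\<close>

definition ypderiv :: "nat \<Rightarrow> 'a::idom poly \<Rightarrow> 'a poly" where
  "ypderiv d f = smult (of_nat d) f - pCons 0 (pderiv f)"

definition hpderiv :: "bool \<Rightarrow> nat \<Rightarrow> 'a::idom poly \<Rightarrow> 'a poly" where
  "hpderiv b d f = (if b then pderiv f else ypderiv d f)"

definition hmult :: "bool \<Rightarrow> 'a::comm_semiring_1 poly \<Rightarrow> 'a poly" where
  "hmult b f = (if b then pCons 0 f else f)"

fun hpderivs :: "bool list \<Rightarrow> nat \<Rightarrow> 'a::idom poly \<Rightarrow> 'a poly" where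
  "hpderivs [] d f = f"
| "hpderivs (b # w) d f = hpderiv b (d - length w) (hpderivs w d f)"

lemma coeff_ypderiv: "coeff (ypderiv d f) i = (of_nat d - of_nat i) * coeff f i"
  by (cases i) (auto simp: ypderiv_def coeff_pderiv algebra_simps)

lemma hpderiv_0 [simp]: "hpderiv b d 0 = 0"
  by (simp add: hpderiv_def ypderiv_def)

lemma degree_hpderiv_le:
  assumes "degree f \<le> d"
  shows "degree (hpderiv b d f) \<le> d - 1"
proof (rule degree_le, intro allI impI)
  fix i assume "d - 1 < i"
  then have "d < Suc i" "d < i \<or> i = d" by auto
  then show "coeff (hpderiv b d f) i = 0"
    using assms by (auto simp: hpderiv_def coeff_pderiv coeff_ypderiv coeff_eq_0)
qed

lemma hpderiv_degree_0: "degree f = 0 \<Longrightarrow> hpderiv b 0 f = 0"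
  by (auto simp: hpderiv_def ypderiv_def elim!: degree_eq_zeroE)

lemma degree_hpderivs_le: "degree f \<le> d \<Longrightarrow> degree (hpderivs w d f) \<le> d - length w"
proof (induction w)
  case (Cons b w)
  then show ?case using degree_hpderiv_le[of "hpderivs w d f" "d - length w" b] by simp
qed simp

lemma hpderivs_eq_0:
  assumes "degree f \<le> d" "d < length w"
  shows "hpderivs w d f = 0"
  using assms
proof (induction w)
  case (Cons b w)
  show ?case
  proof (cases "d < length w")
    case False
    then have "d = length w" using Cons.prems by simp
    then show ?thesis
      using degree_hpderivs_le[OF Cons.prems(1), of w] by (simp add: hpderiv_degree_0)
  qed (use Cons in simp)
qed simp

lemma ypderiv_mult: "ypderiv (d + e) (f * g) = ypderiv d f * g + f * ypderiv e g"
  by (simp add: ypderiv_def pderiv_mult smult_add_left algebra_simps mult_pCons_left mult_pCons_right)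

lemma hpderiv_mult: "hpderiv b (d + e) (f * g) = hpderiv b d f * g + f * hpderiv b e g"
  by (simp add: hpderiv_def pderiv_mult ypderiv_mult mult.commute)

lemma pderiv_ypderiv: "pderiv (ypderiv (Suc e) f) = ypderiv e (pderiv f)"
  by (simp add: ypderiv_def pderiv_diff pderiv_smult pderiv_pCons pderiv_add smult_add_left)

lemma hpderiv_commute: "hpderiv a e (hpderiv b (Suc e) f) = hpderiv b e (hpderiv a (Suc e) f)"
  by (cases a; cases b) (simp_all add: hpderiv_def pderiv_ypderiv)

lemma hpderivs_Cons:
  assumes "degree f \<le> d"
  shows "hpderivs (b # w) d f = hpderivs w (d - 1) (hpderiv b d f)"
proof (induction w)
  case (Cons a w)
  have "hpderivs (b # a # w) d f = hpderiv a (d - Suc (length w)) (hpderiv b (d - length w) (hpderivs w d f))"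
  proof (cases "d - length w")
    case 0
    then have "degree (hpderivs w d f) = 0" using degree_hpderivs_le[OF assms, of w] by simp
    then show ?thesis using 0 by (simp add: hpderiv_degree_0)
  next
    case (Suc e)
    then have "d - Suc (length w) = e" by simp
    then show ?thesis using Suc hpderiv_commute[of b e a] by simp
  qed
  also have "\<dots> = hpderivs (a # w) (d - 1) (hpderiv b d f)"
    using Cons by simp
  finally show ?case .
qed simp

lemma euler_identity: "smult (of_nat d) f = hmult True (hpderiv True d f) + hmult False (hpderiv False d f)"
  by (simp add: hmult_def hpderiv_def ypderiv_def)

lemma hmult_mult: "hmult b (f * g) = f * hmult b g"
  by (simp add: hmult_def mult_pCons_right)

section \<open>The Fock inner product\<close>

text \<open>
  For polynomials of degree at most d this is d! times the Bombieri--Weyl inner product of the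
  associated forms of degree d.
\<close>

definition fock_inner :: "nat \<Rightarrow> complex poly \<Rightarrow> complex poly \<Rightarrow> complex" where
  "fock_inner d f g = (\<Sum>i\<le>d. coeff f i * cnj (coeff g i) * of_nat (fact i * fact (d - i)))"

lemma fock_inner_0_left [simp]: "fock_inner d 0 g = 0"
  and fock_inner_0_right [simp]: "fock_inner d f 0 = 0"
  by (simp_all add: fock_inner_def)

lemma fock_inner_add_left: "fock_inner d (f + g) h = fock_inner d f h + fock_inner d g h"
  and fock_inner_add_right: "fock_inner d h (f + g) = fock_inner d h f + fock_inner d h g"
  and fock_inner_diff_left: "fock_inner d (f - g) h = fock_inner d f h - fock_inner d g h"
  and fock_inner_diff_right: "fock_inner d h (f - g) = fock_inner d h f - fock_inner d h g"
  and fock_inner_smult_left: "fock_inner d (smult c f) h = c * fock_inner d f h"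
  and fock_inner_smult_right: "fock_inner d h (smult c f) = cnj c * fock_inner d h f"
  by (simp_all add: fock_inner_def algebra_simps sum.distrib sum_subtractf sum_distrib_left)

lemma cnj_fock_inner: "cnj (fock_inner d f g) = fock_inner d g f"
  by (simp add: fock_inner_def algebra_simps)

lemma fock_inner_const: "fock_inner 0 f g = coeff f 0 * cnj (coeff g 0)"
  by (simp add: fock_inner_def)

lemma fock_inner_self: "fock_inner d f f = of_real (\<Sum>i\<le>d. (cmod (coeff f i))\<^sup>2 * (fact i * fact (d - i)))"
  unfolding fock_inner_def of_real_sum
  by (intro sum.cong refl) (simp flip: complex_norm_square)

lemma fock_inner_self_nonneg: "fock_inner d f f \<in> \<real>\<^sub>\<ge>\<^sub>0"
  unfolding fock_inner_self nonneg_Reals_of_real_iff by (intro sum_nonneg) auto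

lemma bw_norm_sq: "bw_norm P ^ 2 = Re (fock_inner (degree P) P P) / fact (degree P)"
proof -
  define k where "k = degree P"
  have "bw_norm P ^ 2 = (\<Sum>i\<le>k. (cmod (coeff P i))\<^sup>2 / real (k choose i))"
    unfolding bw_norm_def k_def by (intro real_sqrt_pow2 sum_nonneg) auto
  also have "\<dots> = (\<Sum>i\<le>k. (cmod (coeff P i))\<^sup>2 * (fact i * fact (k - i))) / fact k"
    by (simp add: binomial_fact sum_divide_distrib)
  finally show ?thesis by (simp add: fock_inner_self k_def)
qed

lemma fock_inner_hmult_left:
  assumes "degree f \<le> d"
  shows "fock_inner (Suc d) (hmult b f) g = fock_inner d f (hpderiv b (Suc d) g)"
proof (cases b)
  case True
  have "fock_inner (Suc d) (pCons 0 f) g =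
      (\<Sum>i\<le>d. coeff f i * cnj (coeff g (Suc i)) * of_nat (fact (Suc i) * fact (d - i)))"
    unfolding fock_inner_def by (subst sum.atMost_Suc_shift) simp
  then show ?thesis
    using True by (simp add: fock_inner_def hmult_def hpderiv_def coeff_pderiv algebra_simps)
next
  case False
  have "fock_inner (Suc d) f g = (\<Sum>i\<le>d. coeff f i * cnj (coeff g i) * of_nat (fact i * fact (Suc d - i)))"
    using assms by (simp add: fock_inner_def coeff_eq_0)
  also have "\<dots> = fock_inner d f (ypderiv (Suc d) g)"
    unfolding fock_inner_def
  proof (intro sum.cong refl)
    fix i assume "i \<in> {..d}"
    then have "fact (Suc d - i) = (of_nat (Suc d) - of_nat i) * (fact (d - i) :: complex)"
      by (simp add: Suc_diff_le of_nat_diff)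
    then show "coeff f i * cnj (coeff g i) * of_nat (fact i * fact (Suc d - i)) =
        coeff f i * cnj (coeff (ypderiv (Suc d) g) i) * of_nat (fact i * fact (d - i))"
      by (simp add: coeff_ypderiv)
  qed
  finally show ?thesis using False by (simp add: hmult_def hpderiv_def)
qed

lemma fock_inner_mult_euler:
  assumes "degree a \<le> m" "degree g \<le> Suc n"
  shows "of_nat (Suc n) * fock_inner (m + Suc n) (a * g) h =
    (\<Sum>b\<in>UNIV. fock_inner (m + n) (a * hpderiv b (Suc n) g) (hpderiv b (m + Suc n) h))"
proof -
  have deg: "degree (a * hpderiv b (Suc n) g) \<le> m + n" for b
    using order_trans[OF degree_mult_le add_mono[OF assms(1) degree_hpderiv_le[OF assms(2)]]] by simp
  have "of_nat (Suc n) * fock_inner (m + Suc n) (a * g) h =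
      fock_inner (m + Suc n) (a * smult (of_nat (Suc n)) g) h"
    by (simp add: fock_inner_smult_left mult_smult_right)
  also have "\<dots> = (\<Sum>b\<in>UNIV. fock_inner (Suc (m + n)) (hmult b (a * hpderiv b (Suc n) g)) h)"
    by (subst euler_identity) (simp add: UNIV_bool hmult_mult distrib_left fock_inner_add_left)
  also have "\<dots> = (\<Sum>b\<in>UNIV. fock_inner (m + n) (a * hpderiv b (Suc n) g) (hpderiv b (m + Suc n) h))"
    by (simp add: fock_inner_hmult_left[OF deg])
  finally show ?thesis .
qed

lemma fock_inner_euler:
  assumes "degree p \<le> Suc k"
  shows "of_nat (Suc k) * fock_inner (Suc k) p p =
    (\<Sum>b\<in>UNIV. fock_inner k (hpderiv b (Suc k) p) (hpderiv b (Suc k) p))"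
  using fock_inner_mult_euler[of 1 0 p k p] assms by simp

section \<open>Bombieri's inequality\<close>

lemma finite_lists_length_bool [simp]: "finite {w :: bool list. length w = n}"
  using finite_lists_length_eq[of "UNIV :: bool set" n] by simp

lemma sum_lists_length_Suc:
  "(\<Sum>w | length w = Suc n. F w) = (\<Sum>b\<in>UNIV. \<Sum>w | length w = n. F (b # w :: bool list))"
proof -
  have eq: "{w. length w = Suc n} = (\<lambda>(b, w). b # w) ` (UNIV \<times> {w. length w = n})"
    by (auto simp: length_Suc_conv)
  have inj: "inj_on (\<lambda>(b, w). b # w) (UNIV \<times> {w :: bool list. length w = n})"
    by (auto intro: inj_onI)
  have "(\<Sum>w | length w = Suc n. F w) = (\<Sum>(b, w)\<in>UNIV \<times> {w. length w = n}. F (b # w))"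
    unfolding eq sum.reindex[OF inj] by (simp add: case_prod_unfold)
  also have "\<dots> = (\<Sum>b\<in>UNIV. \<Sum>w | length w = n. F (b # w))"
    by (rule sum.cartesian_product[symmetric])
  finally show ?thesis .
qed

definition bombieri_sum :: "nat \<Rightarrow> nat \<Rightarrow> nat \<Rightarrow> complex poly \<Rightarrow> nat \<Rightarrow> complex poly \<Rightarrow> complex" where
  "bombieri_sum i j k p l q = (\<Sum>v | length v = i. \<Sum>w | length w = j.
     fock_inner (k - i + (l - j)) (hpderivs v k p * hpderivs w l q) (hpderivs w k p * hpderivs v l q))"

lemma bombieri_sum_0_0: "bombieri_sum 0 0 k p l q = fock_inner (k + l) (p * q) (p * q)"
  by (simp add: bombieri_sum_def)

lemma bombieri_sum_swap: "bombieri_sum i j k p l q = bombieri_sum j i l q k p"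
  unfolding bombieri_sum_def by (subst sum.swap) (simp add: mult.commute add.commute)

text \<open>
  Euler's identity for the factor \<open>hpderivs w l q\<close> of the left argument; by adjointness the
  resulting derivative moves to the right argument, where the Leibniz rule distributes it.
\<close>

lemma bombieri_term_rec:
  assumes p: "degree p \<le> k" and q: "degree q \<le> l" and "j < l"
    and "length v = i" and "length w = j"
  shows "of_nat (l - j) * fock_inner (k - i + (l - j))
      (hpderivs v k p * hpderivs w l q) (hpderivs w k p * hpderivs v l q) =
    (\<Sum>b\<in>UNIV. fock_inner (k - i + (l - Suc j))
      (hpderivs v k p * hpderivs (b # w) l q) (hpderivs (b # w) k p * hpderivs v l q)) +
    (\<Sum>b\<in>UNIV. fock_inner (k - i + (l - Suc j))
      (hpderivs v k p * hpderivs (b # w) l q) (hpderivs w k p * hpderivs (b # v) l q))"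
    (is "_ = ?S1 + ?S2")
proof (cases "hpderivs v k p = 0 \<or> hpderivs w k p = 0 \<or> hpderivs v l q = 0")
  case False
  then have "i \<le> k" "j \<le> k" "i \<le> l"
    using hpderivs_eq_0[OF p, of v] hpderivs_eq_0[OF p, of w] hpderivs_eq_0[OF q, of v] assms
    by (metis not_le)+
  then have split: "hpderiv b (k - i + (l - j)) (hpderivs w k p * hpderivs v l q) =
      hpderivs (b # w) k p * hpderivs v l q + hpderivs w k p * hpderivs (b # v) l q" for b
  proof -
    have "k - i + (l - j) = (k - j) + (l - i)" using \<open>i \<le> k\<close> \<open>j \<le> k\<close> \<open>i \<le> l\<close> \<open>j < l\<close> by simp
    then show ?thesis using hpderiv_mult[of b "k - j" "l - i"] assms by simp
  qed
  define m n where "m = k - i" and "n = l - Suc j"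
  have idx: "Suc n = l - j" "m + Suc n = k - i + (l - j)" "m + n = k - i + (l - Suc j)"
    using \<open>j < l\<close> by (auto simp: m_def n_def)
  have "of_nat (Suc n) * fock_inner (m + Suc n)
      (hpderivs v k p * hpderivs w l q) (hpderivs w k p * hpderivs v l q) =
    (\<Sum>b\<in>UNIV. fock_inner (m + n) (hpderivs v k p * hpderiv b (Suc n) (hpderivs w l q))
      (hpderiv b (m + Suc n) (hpderivs w k p * hpderivs v l q)))"
    using degree_hpderivs_le[OF p, of v] degree_hpderivs_le[OF q, of w] assms idx
    by (intro fock_inner_mult_euler) (auto simp: m_def)
  also have "\<dots> = ?S1 + ?S2"
    unfolding idx(2,3) unfolding idx(1) split using assms by (simp add: fock_inner_add_right sum.distrib)
  finally show ?thesis unfolding idx(2) unfolding idx(1) .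
qed auto

lemma bombieri_sum_rec:
  assumes p: "degree p \<le> k" and q: "degree q \<le> l" and "j < l"
  shows "of_nat (l - j) * bombieri_sum i j k p l q =
    bombieri_sum i (Suc j) k p l q + (\<Sum>b\<in>UNIV. bombieri_sum i j k p (l - 1) (hpderiv b l q))"
proof -
  define e where "e = k - i + (l - Suc j)"
  define S1 where "S1 v w = (\<Sum>b\<in>UNIV. fock_inner e
      (hpderivs v k p * hpderivs (b # w) l q) (hpderivs (b # w) k p * hpderivs v l q))" for v w
  define S2 where "S2 v w = (\<Sum>b\<in>UNIV. fock_inner e
      (hpderivs v k p * hpderivs (b # w) l q) (hpderivs w k p * hpderivs (b # v) l q))" for v w
  have "of_nat (l - j) * bombieri_sum i j k p l q =
      (\<Sum>v | length v = i. \<Sum>w | length w = j. S1 v w) + (\<Sum>v | length v = i. \<Sum>w | length w = j. S2 v w)"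
    unfolding bombieri_sum_def sum_distrib_left sum.distrib[symmetric]
    by (intro sum.cong refl) (simp add: S1_def S2_def e_def bombieri_term_rec[OF assms])
  also have "(\<Sum>v | length v = i. \<Sum>w | length w = j. S1 v w) = bombieri_sum i (Suc j) k p l q"
    unfolding S1_def bombieri_sum_def sum_lists_length_Suc e_def
    by (intro sum.cong refl, rule sum.swap)
  also have "(\<Sum>v | length v = i. \<Sum>w | length w = j. S2 v w) =
      (\<Sum>v | length v = i. \<Sum>b\<in>UNIV. \<Sum>w | length w = j. fock_inner e
        (hpderivs v k p * hpderivs (b # w) l q) (hpderivs w k p * hpderivs (b # v) l q))"
    unfolding S2_def by (intro sum.cong refl, rule sum.swap)
  also have "\<dots> = (\<Sum>b\<in>UNIV. \<Sum>v | length v = i. \<Sum>w | length w = j. fock_inner e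
        (hpderivs v k p * hpderivs (b # w) l q) (hpderivs w k p * hpderivs (b # v) l q))"
    by (rule sum.swap)
  also have "\<dots> = (\<Sum>b\<in>UNIV. bombieri_sum i j k p (l - 1) (hpderiv b l q))"
    unfolding bombieri_sum_def hpderivs_Cons[OF q] e_def by (simp add: diff_diff_left)
  finally show ?thesis .
qed

lemma nonneg_Reals_sum: "(\<And>x. x \<in> A \<Longrightarrow> f x \<in> \<real>\<^sub>\<ge>\<^sub>0) \<Longrightarrow> sum f A \<in> \<real>\<^sub>\<ge>\<^sub>0"
  by (induction A rule: infinite_finite_induct) auto

lemma bombieri_sum_nonneg_base:
  assumes p: "degree p \<le> k" and q: "degree q \<le> l" and "k \<le> i" "l \<le> j"
  shows "bombieri_sum i j k p l q \<in> \<real>\<^sub>\<ge>\<^sub>0"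
proof -
  define a where "a v = coeff (hpderivs v k p) 0" for v
  define c where "c v = coeff (hpderivs v l q) 0" for v
  have prod: "bombieri_sum i j k p l q =
      (\<Sum>v | length v = i. a v * cnj (c v)) * (\<Sum>w | length w = j. c w * cnj (a w))"
    unfolding bombieri_sum_def sum_product using assms
    by (intro sum.cong refl) (simp add: fock_inner_const coeff_mult_0 a_def c_def)
  consider "i = j" | "i < j" | "j < i" by linarith
  then show ?thesis
  proof cases
    case 1
    have "bombieri_sum i j k p l q = of_real ((cmod (\<Sum>v | length v = i. a v * cnj (c v)))\<^sup>2)"
      unfolding complex_norm_square prod by (simp add: 1 mult.commute)
    then show ?thesis by simp
  next
    case 2
    then have "a w = 0" if "length w = j" for w
      using that hpderivs_eq_0[OF p, of w] \<open>k \<le> i\<close> by (simp add: a_def)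
    then show ?thesis using prod by simp
  next
    case 3
    then have "c v = 0" if "length v = i" for v
      using that hpderivs_eq_0[OF q, of v] \<open>l \<le> j\<close> by (simp add: c_def)
    then show ?thesis using prod by simp
  qed
qed

lemma bombieri_sum_nonneg_step:
  assumes "degree p \<le> k" "degree q \<le> l" "j < l"
    and "bombieri_sum i (Suc j) k p l q \<in> \<real>\<^sub>\<ge>\<^sub>0"
    and "\<And>b. bombieri_sum i j k p (l - 1) (hpderiv b l q) \<in> \<real>\<^sub>\<ge>\<^sub>0"
  shows "bombieri_sum i j k p l q \<in> \<real>\<^sub>\<ge>\<^sub>0"
proof -
  have "bombieri_sum i j k p l q = (bombieri_sum i (Suc j) k p l q +
      (\<Sum>b\<in>UNIV. bombieri_sum i j k p (l - 1) (hpderiv b l q))) / of_nat (l - j)"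
    using bombieri_sum_rec[OF assms(1-3), of i] assms(3) by (simp add: field_simps)
  then show ?thesis using assms(4,5) by (simp add: nonneg_Reals_sum)
qed

lemma bombieri_sum_nonneg:
  "degree p \<le> k \<Longrightarrow> degree q \<le> l \<Longrightarrow> bombieri_sum i j k p l q \<in> \<real>\<^sub>\<ge>\<^sub>0"
proof (induction "(k - i) + (l - j)" arbitrary: i j k p l q rule: less_induct)
  case less
  consider "j < l" | "i < k" | "k \<le> i" "l \<le> j" by linarith
  then show ?case
  proof cases
    case 1
    show ?thesis
    proof (rule bombieri_sum_nonneg_step[OF less.prems 1])
      show "bombieri_sum i (Suc j) k p l q \<in> \<real>\<^sub>\<ge>\<^sub>0"
        using 1 by (intro less.hyps less.prems) auto
      show "bombieri_sum i j k p (l - 1) (hpderiv b l q) \<in> \<real>\<^sub>\<ge>\<^sub>0" for b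
        using 1 degree_hpderiv_le[OF less.prems(2)] by (intro less.hyps less.prems) auto
    qed
  next
    case 2
    have "bombieri_sum j i l q k p \<in> \<real>\<^sub>\<ge>\<^sub>0"
    proof (rule bombieri_sum_nonneg_step[OF less.prems(2,1) 2])
      show "bombieri_sum j (Suc i) l q k p \<in> \<real>\<^sub>\<ge>\<^sub>0"
        unfolding bombieri_sum_swap[of j] using 2 by (intro less.hyps less.prems) auto
      show "bombieri_sum j i l q (k - 1) (hpderiv b k p) \<in> \<real>\<^sub>\<ge>\<^sub>0" for b
        unfolding bombieri_sum_swap[of j] using 2 degree_hpderiv_le[OF less.prems(1)]
        by (intro less.hyps less.prems) auto
    qed
    then show ?thesis by (simp add: bombieri_sum_swap[of j])
  next
    case 3
    then show ?thesis using bombieri_sum_nonneg_base less.prems by blast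
  qed
qed

lemma fock_inner_mult_self_ge:
  assumes "degree p \<le> k" "degree q \<le> l"
  shows "Re (fock_inner k p p) * Re (fock_inner l q q) \<le> Re (fock_inner (k + l) (p * q) (p * q))"
  using assms
proof (induction k arbitrary: p)
  case 0
  then obtain c where p: "p = [:c:]" by (auto elim: degree_eq_zeroE)
  have "fock_inner l (p * q) (p * q) = of_real ((cmod c)\<^sup>2) * fock_inner l q q"
    unfolding complex_norm_square by (simp add: p fock_inner_smult_left fock_inner_smult_right)
  moreover have "fock_inner 0 p p = of_real ((cmod c)\<^sup>2)"
    unfolding complex_norm_square by (simp add: p fock_inner_const)
  ultimately show ?case by simp
next
  case (Suc k)
  have deg: "degree (hpderiv b (Suc k) p) \<le> k" for b
    using degree_hpderiv_le[OF Suc.prems(1)] by simp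
  have "of_nat (Suc k) * fock_inner (Suc k + l) (p * q) (p * q) = bombieri_sum 0 (Suc 0) l q (Suc k) p +
      (\<Sum>b\<in>UNIV. fock_inner (k + l) (hpderiv b (Suc k) p * q) (hpderiv b (Suc k) p * q))"
    using bombieri_sum_rec[OF Suc.prems(2,1), of 0 0]
    by (simp add: bombieri_sum_0_0 mult.commute add.commute)
  from arg_cong[OF this, of Re]
  have "real (Suc k) * Re (fock_inner (Suc k + l) (p * q) (p * q)) = Re (bombieri_sum 0 (Suc 0) l q (Suc k) p) +
      (\<Sum>b\<in>UNIV. Re (fock_inner (k + l) (hpderiv b (Suc k) p * q) (hpderiv b (Suc k) p * q)))"
    by (simp add: UNIV_bool)
  moreover have "0 \<le> Re (bombieri_sum 0 (Suc 0) l q (Suc k) p)"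
    using bombieri_sum_nonneg[OF Suc.prems(2,1)] by (simp add: complex_nonneg_Reals_iff)
  ultimately have "(\<Sum>b\<in>UNIV. Re (fock_inner (k + l) (hpderiv b (Suc k) p * q) (hpderiv b (Suc k) p * q)))
      \<le> real (Suc k) * Re (fock_inner (Suc k + l) (p * q) (p * q))"
    by linarith
  moreover have "real (Suc k) * Re (fock_inner (Suc k) p p) =
      (\<Sum>b\<in>UNIV. Re (fock_inner k (hpderiv b (Suc k) p) (hpderiv b (Suc k) p)))"
    using arg_cong[OF fock_inner_euler[OF Suc.prems(1)], of Re] by (simp add: UNIV_bool)
  moreover have "(\<Sum>b\<in>UNIV. Re (fock_inner k (hpderiv b (Suc k) p) (hpderiv b (Suc k) p)) * Re (fock_inner l q q))
      \<le> (\<Sum>b\<in>UNIV. Re (fock_inner (k + l) (hpderiv b (Suc k) p * q) (hpderiv b (Suc k) p * q)))"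
    by (intro sum_mono Suc.IH deg Suc.prems)
  ultimately have "real (Suc k) * (Re (fock_inner (Suc k) p p) * Re (fock_inner l q q))
      \<le> real (Suc k) * Re (fock_inner (Suc k + l) (p * q) (p * q))"
    by (simp only: mult.assoc[symmetric] sum_distrib_right)
  then show ?case by (simp only: mult_le_cancel_left_pos of_nat_0_less_iff zero_less_Suc)
qed

lemma bw_norm_mult_bombieri:
  assumes "P \<noteq> 0" "Q \<noteq> 0"
  shows "bw_norm P ^ 2 * bw_norm Q ^ 2 \<le>
    fact (degree P + degree Q) / (fact (degree P) * fact (degree Q)) * bw_norm (P * Q) ^ 2"
proof -
  have "bw_norm P ^ 2 * bw_norm Q ^ 2 = Re (fock_inner (degree P) P P) * Re (fock_inner (degree Q) Q Q)
      / (fact (degree P) * fact (degree Q))"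
    by (simp add: bw_norm_sq)
  also have "\<dots> \<le> Re (fock_inner (degree P + degree Q) (P * Q) (P * Q)) / (fact (degree P) * fact (degree Q))"
    by (intro divide_right_mono fock_inner_mult_self_ge) auto
  also have "\<dots> = fact (degree P + degree Q) / (fact (degree P) * fact (degree Q)) * bw_norm (P * Q) ^ 2"
    using assms by (simp add: bw_norm_sq degree_mult_eq)
  finally show ?thesis .
qed

lemma bw_norm_prod_le_multinomial:
  fixes P :: "nat \<Rightarrow> complex poly"
  assumes "\<And>j. j < m \<Longrightarrow> P j \<noteq> 0"
  shows "(\<Prod>j<m. bw_norm (P j) ^ 2) \<le>
    fact (\<Sum>j<m. degree (P j)) / (\<Prod>j<m. fact (degree (P j))) * bw_norm (\<Prod>j<m. P j) ^ 2"
  using assms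
proof (induction m)
  case 0
  then show ?case by (simp add: bw_norm_def)
next
  case (Suc m)
  define S F R where "S = (\<Sum>j<m. degree (P j))" and "F = (\<Prod>j<m. fact (degree (P j)) :: real)"
    and "R = (\<Prod>j<m. P j)"
  have "R \<noteq> 0" "P m \<noteq> 0" using Suc.prems by (auto simp: R_def)
  have "degree R = S"
    unfolding R_def S_def using Suc.prems by (intro degree_prod_eq_sum_degree) auto
  have "F > 0" by (simp add: F_def prod_pos)
  have "(\<Prod>j<m. bw_norm (P j) ^ 2) \<le> fact S / F * bw_norm R ^ 2"
    using Suc by (simp add: S_def F_def R_def)
  then have "(\<Prod>j<m. bw_norm (P j) ^ 2) * bw_norm (P m) ^ 2 \<le> fact S / F * bw_norm R ^ 2 * bw_norm (P m) ^ 2"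
    by (rule mult_right_mono) simp
  then have "(\<Prod>j<Suc m. bw_norm (P j) ^ 2) \<le> fact S / F * bw_norm R ^ 2 * bw_norm (P m) ^ 2"
    by simp
  also have "\<dots> = fact S / F * (bw_norm R ^ 2 * bw_norm (P m) ^ 2)"
    by simp
  also have "\<dots> \<le> fact S / F * (fact (S + degree (P m)) / (fact S * fact (degree (P m))) * bw_norm (R * P m) ^ 2)"
    using bw_norm_mult_bombieri[OF \<open>R \<noteq> 0\<close> \<open>P m \<noteq> 0\<close>] \<open>degree R = S\<close> \<open>F > 0\<close>
    by (intro mult_left_mono) auto
  also have "\<dots> = fact (S + degree (P m)) / (F * fact (degree (P m))) * bw_norm (R * P m) ^ 2"
    using \<open>F > 0\<close> by (simp add: field_simps)
  finally show ?case by (simp add: S_def F_def R_def)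
qed

section \<open>Multiplication by a linear factor\<close>

lemma fock_inner_linear_left:
  assumes "degree h \<le> d"
  shows "fock_inner (Suc d) ([:-r, 1:] * h) g =
    fock_inner d h (pderiv g) - r * fock_inner d h (ypderiv (Suc d) g)"
proof -
  have "[:-r, 1:] * h = hmult True h - smult r (hmult False h)"
    by (simp add: hmult_def mult_pCons_left)
  then show ?thesis
    by (simp add: fock_inner_diff_left fock_inner_smult_left fock_inner_hmult_left[OF assms] hpderiv_def)
qed

lemma fock_inner_linear_right:
  assumes "degree h \<le> d"
  shows "fock_inner (Suc d) g ([:-r, 1:] * h) =
    fock_inner d (pderiv g) h - cnj r * fock_inner d (ypderiv (Suc d) g) h"
  using arg_cong[OF fock_inner_linear_left[OF assms, of r g], of cnj] by (simp add: cnj_fock_inner)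

lemma fock_inner_linear_factor_self:
  assumes "degree Q \<le> k"
  shows "fock_inner (Suc k) ([:-r, 1:] * Q) ([:-r, 1:] * Q) = (1 + r * cnj r) * fock_inner k Q Q
    + fock_inner k Q ([:-r, 1:] * pderiv Q) - r * fock_inner k Q ([:-r, 1:] * ypderiv k Q)"
proof -
  define l where "l = [:-r, 1:]"
  have "pderiv l = 1"
    by (simp add: l_def pderiv_pCons)
  then have px: "pderiv (l * Q) = Q + l * pderiv Q"
    by (simp only: pderiv_mult mult_1_right add.commute)
  have py: "ypderiv (Suc k) (l * Q) = smult (-r) Q + l * ypderiv k Q"
    using ypderiv_mult[of 1 k l Q] by (simp add: l_def ypderiv_def pderiv_pCons)
  have "fock_inner (Suc k) (l * Q) (l * Q) = (1 + r * cnj r) * fock_inner k Q Q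
      + fock_inner k Q (l * pderiv Q) - r * fock_inner k Q (l * ypderiv k Q)"
    using fock_inner_linear_left[OF assms, of r "l * Q"] unfolding l_def[symmetric] px py
    by (simp add: fock_inner_add_right fock_inner_diff_right fock_inner_smult_right algebra_simps)
  then show ?thesis by (simp only: l_def)
qed

text \<open>
  By adjointness and Euler's identity for Q, the two sides differ by the squared norm Z of
  \<open>r Q' + \<partial>\<^sub>y Q\<close>.
\<close>

lemma fock_norm_linear_factor_le:
  assumes "degree Q \<le> k"
  shows "Re (fock_inner (Suc k) ([:-r, 1:] * Q) ([:-r, 1:] * Q)) \<le>
    (1 + (cmod r)\<^sup>2) * (real (Suc k) * Re (fock_inner k Q Q))"
proof -
  define l where "l = [:-r, 1:]"
  define N where "N = fock_inner k Q Q"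
  have r: "r * cnj r = of_real ((cmod r)\<^sup>2)"
    by (rule complex_norm_square[symmetric])
  note X = fock_inner_linear_factor_self[OF assms, of r, folded l_def N_def]
  have "Re (fock_inner (Suc k) (l * Q) (l * Q)) \<le> (1 + (cmod r)\<^sup>2) * (real (Suc k) * Re N)"
  proof (cases k)
    case 0
    then have "pderiv Q = 0" "ypderiv k Q = 0"
      using assms hpderiv_degree_0[of Q True] hpderiv_degree_0[of Q False] by (simp_all add: hpderiv_def)
    then show ?thesis using X 0 r by simp
  next
    case (Suc k')
    define A D where "A = pderiv Q" and "D = ypderiv k Q"
    have deg: "degree A \<le> k'" "degree D \<le> k'"
      using degree_hpderiv_le[OF assms, of True] degree_hpderiv_le[OF assms, of False] Suc
      by (simp_all add: A_def D_def hpderiv_def)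
    have euler: "of_nat k * N = fock_inner k' A A + fock_inner k' D D"
      using fock_inner_euler[of Q k'] assms Suc by (simp add: N_def A_def D_def hpderiv_def UNIV_bool)
    define Z where "Z = fock_inner k' (smult r A + D) (smult r A + D)"
    have adj: "fock_inner k Q (l * h) = fock_inner k' A h - cnj r * fock_inner k' D h"
      if "degree h \<le> k'" for h
      using fock_inner_linear_right[OF that, of Q r]
      unfolding Suc[symmetric] l_def[symmetric] A_def[symmetric] D_def[symmetric] .
    have "fock_inner (Suc k) (l * Q) (l * Q) =
        (1 + r * cnj r) * N + (1 + r * cnj r) * (fock_inner k' A A + fock_inner k' D D) - Z"
      unfolding X A_def[symmetric] D_def[symmetric] Z_def adj[OF deg(1)] adj[OF deg(2)]
      by (simp add: fock_inner_add_left fock_inner_add_right fock_inner_smult_left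
          fock_inner_smult_right algebra_simps)
    also have "\<dots> = (1 + r * cnj r) * (of_nat (Suc k) * N) - Z"
      by (simp add: euler[symmetric] algebra_simps)
    finally have "Re (fock_inner (Suc k) (l * Q) (l * Q)) = (1 + (cmod r)\<^sup>2) * (real (Suc k) * Re N) - Re Z"
      unfolding r by simp
    moreover have "0 \<le> Re Z"
      using fock_inner_self_nonneg by (simp add: Z_def complex_nonneg_Reals_iff)
    ultimately show ?thesis by simp
  qed
  then show ?thesis by (simp only: l_def N_def)
qed

lemma bw_norm_linear_factor_le:
  assumes "Q \<noteq> 0"
  shows "bw_norm ([:-r, 1:] * Q) ^ 2 \<le> (1 + (cmod r)\<^sup>2) * bw_norm Q ^ 2"
proof -
  have "degree ([:-r, 1:] * Q) = Suc (degree Q)"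
    using assms by (subst degree_mult_eq) auto
  then have "bw_norm ([:-r, 1:] * Q) ^ 2 =
      Re (fock_inner (Suc (degree Q)) ([:-r, 1:] * Q) ([:-r, 1:] * Q)) / (real (Suc (degree Q)) * fact (degree Q))"
    by (simp add: bw_norm_sq)
  also have "\<dots> \<le> (1 + (cmod r)\<^sup>2) * (real (Suc (degree Q)) * Re (fock_inner (degree Q) Q Q))
      / (real (Suc (degree Q)) * fact (degree Q))"
    by (intro divide_right_mono fock_norm_linear_factor_le) auto
  also have "\<dots> = (1 + (cmod r)\<^sup>2) * bw_norm Q ^ 2"
    by (simp add: bw_norm_sq)
  finally show ?thesis .
qed

lemma bw_norm_smult_prod_linear_le:
  assumes "finite I"
  shows "bw_norm (smult c (\<Prod>i\<in>I. [:-x i, 1:])) ^ 2 \<le> (cmod c)\<^sup>2 * (\<Prod>i\<in>I. 1 + (cmod (x i))\<^sup>2)"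
  using assms
proof (induction I rule: finite_induct)
  case empty
  show ?case by (simp add: bw_norm_def)
next
  case (insert j I)
  show ?case
  proof (cases "c = 0")
    case False
    then have "smult c (\<Prod>i\<in>I. [:-x i, 1:]) \<noteq> 0"
      using insert by (simp add: prod_zero_iff)
    have "bw_norm (smult c (\<Prod>i\<in>insert j I. [:-x i, 1:])) ^ 2 =
        bw_norm ([:-x j, 1:] * smult c (\<Prod>i\<in>I. [:-x i, 1:])) ^ 2"
      by (simp only: prod.insert[OF insert(1,2)] mult_smult_right)
    also have "\<dots> \<le> (1 + (cmod (x j))\<^sup>2) * bw_norm (smult c (\<Prod>i\<in>I. [:-x i, 1:])) ^ 2"
      by (rule bw_norm_linear_factor_le) fact
    also have "\<dots> \<le> (1 + (cmod (x j))\<^sup>2) * ((cmod c)\<^sup>2 * (\<Prod>i\<in>I. 1 + (cmod (x i))\<^sup>2))"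
      by (intro mult_left_mono insert.IH) auto
    finally show ?thesis
      by (simp only: prod.insert[OF insert(1,2)] mult.left_commute)
  qed (simp add: bw_norm_def)
qed

section \<open>A weighted norm and Landau's inequality\<close>

text \<open>The truncation N only has to bound the degrees of the polynomials involved.\<close>

definition weighted_inner :: "real \<Rightarrow> nat \<Rightarrow> complex poly \<Rightarrow> complex poly \<Rightarrow> complex" where
  "weighted_inner s N f g = (\<Sum>i\<le>N. coeff f i * cnj (coeff g i) * of_real (s ^ i))"

lemma weighted_inner_add_left: "weighted_inner s N (f + g) h = weighted_inner s N f h + weighted_inner s N g h"
  and weighted_inner_add_right: "weighted_inner s N h (f + g) = weighted_inner s N h f + weighted_inner s N h g"
  and weighted_inner_diff_left: "weighted_inner s N (f - g) h = weighted_inner s N f h - weighted_inner s N g h"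
  and weighted_inner_diff_right: "weighted_inner s N h (f - g) = weighted_inner s N h f - weighted_inner s N h g"
  and weighted_inner_smult_left: "weighted_inner s N (smult c f) h = c * weighted_inner s N f h"
  and weighted_inner_smult_right: "weighted_inner s N h (smult c f) = cnj c * weighted_inner s N h f"
  by (simp_all add: weighted_inner_def algebra_simps sum.distrib sum_subtractf sum_distrib_left)

lemma weighted_inner_pCons_0:
  "weighted_inner s (Suc N) (pCons 0 f) (pCons 0 g) = of_real s * weighted_inner s N f g"
  unfolding weighted_inner_def by (subst sum.atMost_Suc_shift) (simp add: sum_distrib_left algebra_simps)

lemma weighted_inner_Suc: "degree f \<le> N \<Longrightarrow> weighted_inner s (Suc N) f g = weighted_inner s N f g"
  by (simp add: weighted_inner_def coeff_eq_0)

lemma Re_weighted_inner_self: "Re (weighted_inner s N f f) = (\<Sum>i\<le>N. (cmod (coeff f i))\<^sup>2 * s ^ i)"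
  unfolding weighted_inner_def Re_sum
  by (intro sum.cong refl) (simp add: complex_mult_cnj cmod_def power2_eq_square)

lemma weighted_inner_linear_factor:
  assumes "degree R < N"
  shows "weighted_inner s N ([:-b, a:] * R) ([:-b, a:] * R) =
    (b * cnj b + a * cnj a * of_real s) * weighted_inner s N R R
    - b * cnj a * weighted_inner s N R (pCons 0 R) - a * cnj b * weighted_inner s N (pCons 0 R) R"
proof -
  obtain M where N: "N = Suc M" and "degree R \<le> M"
    using assms by (cases N) auto
  then have "weighted_inner s N (pCons 0 R) (pCons 0 R) = of_real s * weighted_inner s N R R"
    by (simp add: weighted_inner_pCons_0 weighted_inner_Suc)
  moreover have "[:-b, a:] * R = smult (-b) R + smult a (pCons 0 R)"
    by (simp add: mult_pCons_left)
  ultimately show ?thesis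
    by (simp add: weighted_inner_add_left weighted_inner_add_right weighted_inner_diff_left
        weighted_inner_diff_right weighted_inner_smult_left weighted_inner_smult_right
        algebra_simps del: smult_pCons)
qed

text \<open>
  A root r with \<open>|r|\<^sup>2 > s\<close> is replaced by its reflection \<open>s / cnj r\<close> in the circle of radius
  \<open>\<surd>s\<close>, which does not change the s-weighted norm.
\<close>

lemma weighted_inner_reflect_root:
  assumes "degree R < N" "s > 0"
  obtains L where "degree L = 1" "(cmod (lead_coeff L))\<^sup>2 * s = max s ((cmod r)\<^sup>2)"
    "weighted_inner s N (L * R) (L * R) = weighted_inner s N ([:-r, 1:] * R) ([:-r, 1:] * R)"
proof (cases "(cmod r)\<^sup>2 \<le> s")
  case True
  then show ?thesis by (intro that[of "[:-r, 1:]"]) (auto simp: max_def)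
next
  case False
  define b where "b = complex_of_real (sqrt s)"
  define a where "a = cnj r / b"
  have "b \<noteq> 0" "cnj b = b" "b * cnj b = of_real s"
    using \<open>s > 0\<close> by (simp_all add: b_def flip: of_real_mult)
  have "r \<noteq> 0" using False \<open>s > 0\<close> by auto
  then have "a \<noteq> 0" using \<open>b \<noteq> 0\<close> by (simp add: a_def)
  have coeffs: "b * cnj b + a * cnj a * of_real s = r * cnj r + 1 * cnj 1 * of_real s"
    "b * cnj a = r * cnj 1" "a * cnj b = 1 * cnj r"
    using \<open>b \<noteq> 0\<close> \<open>cnj b = b\<close> \<open>b * cnj b = of_real s\<close> \<open>s > 0\<close>
    by (simp_all add: a_def field_simps)
  show ?thesis
  proof (rule that[of "[:-b, a:]"])
    show "degree [:-b, a:] = 1" using \<open>a \<noteq> 0\<close> by simp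
    have "(cmod a)\<^sup>2 = (cmod r)\<^sup>2 / s"
      using \<open>s > 0\<close> by (simp add: a_def b_def norm_divide power_divide)
    then show "(cmod (lead_coeff [:-b, a:]))\<^sup>2 * s = max s ((cmod r)\<^sup>2)"
      using \<open>a \<noteq> 0\<close> \<open>s > 0\<close> False by simp
    show "weighted_inner s N ([:-b, a:] * R) ([:-b, a:] * R) =
        weighted_inner s N ([:-r, 1:] * R) ([:-r, 1:] * R)"
      unfolding weighted_inner_linear_factor[OF assms(1)] coeffs ..
  qed
qed

lemma lead_coeff_root_bound_le_weighted_norm:
  assumes "s > 0" "finite I" "degree Q + card I \<le> N"
  shows "(cmod (lead_coeff Q))\<^sup>2 * s ^ degree Q * (\<Prod>i\<in>I. max s ((cmod (x i))\<^sup>2))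
    \<le> Re (weighted_inner s N (Q * (\<Prod>i\<in>I. [:-x i, 1:])) (Q * (\<Prod>i\<in>I. [:-x i, 1:])))"
  using assms(2,3)
proof (induction I arbitrary: Q rule: finite_induct)
  case empty
  have "(cmod (coeff Q (degree Q)))\<^sup>2 * s ^ degree Q \<le> (\<Sum>i\<le>N. (cmod (coeff Q i))\<^sup>2 * s ^ i)"
    using empty \<open>s > 0\<close> by (intro member_le_sum) auto
  then show ?case by (simp add: Re_weighted_inner_self)
next
  case (insert j I)
  show ?case
  proof (cases "Q = 0")
    case False
    define R where "R = (\<Prod>i\<in>I. [:-x i, 1:])"
    have "R \<noteq> 0" "degree R = card I"
      using insert.hyps by (simp_all add: R_def degree_prod_eq_sum_degree prod_zero_iff)
    then have "degree (Q * R) < N"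
      using insert False by (simp add: degree_mult_eq)
    then obtain L where L: "degree L = 1" "(cmod (lead_coeff L))\<^sup>2 * s = max s ((cmod (x j))\<^sup>2)"
      "weighted_inner s N (L * (Q * R)) (L * (Q * R)) =
        weighted_inner s N ([:-x j, 1:] * (Q * R)) ([:-x j, 1:] * (Q * R))"
      using weighted_inner_reflect_root \<open>s > 0\<close> by blast
    then have "L \<noteq> 0" by auto
    then have deg: "degree (Q * L) = Suc (degree Q)"
      using False L(1) by (simp add: degree_mult_eq)
    have "(cmod (lead_coeff (Q * L)))\<^sup>2 * s ^ degree (Q * L) =
        (cmod (lead_coeff Q))\<^sup>2 * s ^ degree Q * ((cmod (lead_coeff L))\<^sup>2 * s)"
      using lead_coeff_mult[of Q L] deg by (simp add: norm_mult power_mult_distrib)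
    then have "(cmod (lead_coeff Q))\<^sup>2 * s ^ degree Q * (\<Prod>i\<in>insert j I. max s ((cmod (x i))\<^sup>2)) =
        (cmod (lead_coeff (Q * L)))\<^sup>2 * s ^ degree (Q * L) * (\<Prod>i\<in>I. max s ((cmod (x i))\<^sup>2))"
      using insert.hyps L(2) by simp
    also have "\<dots> \<le> Re (weighted_inner s N (Q * L * R) (Q * L * R))"
      unfolding R_def using insert deg by (intro insert.IH) simp
    also have "Q * L * R = L * (Q * R)" by (simp add: ac_simps)
    also have "weighted_inner s N (L * (Q * R)) (L * (Q * R)) =
        weighted_inner s N (Q * (\<Prod>i\<in>insert j I. [:-x i, 1:])) (Q * (\<Prod>i\<in>insert j I. [:-x i, 1:]))"
      unfolding L(3) using insert.hyps by (simp add: R_def ac_simps)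
    finally show ?thesis .
  qed (simp add: weighted_inner_def)
qed

section \<open>The Bombieri--Weyl norm as an integral\<close>

lemma has_integral_beta_monomial:
  assumes "i \<le> n"
  shows "((\<lambda>t. t ^ i * (1 - t) ^ (n - i)) has_integral fact i * fact (n - i) / fact (Suc n))
    {0<..<(1::real)}"
proof -
  have "((\<lambda>t. t powr (real (Suc i) - 1) * (1 - t) powr (real (Suc (n - i)) - 1)) has_integral
      Beta (real (Suc i)) (real (Suc (n - i)))) {0<..<1}"
    using has_integral_Beta_real[of "real (Suc i)" "real (Suc (n - i))"]
    by (simp add: has_integral_Icc_iff_Ioo)
  then have "((\<lambda>t. t ^ i * (1 - t) ^ (n - i)) has_integral Beta (real (Suc i)) (real (Suc (n - i))))
      {0<..<1}"
    by (rule has_integral_eq[rotated]) (auto simp: powr_realpow)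
  moreover have "Beta (real (Suc i)) (real (Suc (n - i))) = fact i * fact (n - i) / fact (Suc n)"
  proof -
    have Gamma: "Gamma (real (Suc m)) = fact m" for m
      using Gamma_fact[of m, where 'a = real] by (simp add: add.commute)
    have sum: "real (Suc i) + real (Suc (n - i)) = real (Suc (Suc n))"
      using assms by simp
    show ?thesis unfolding Beta_def sum Gamma ..
  qed
  ultimately show ?thesis by simp
qed

lemma continuous_on_x_ln_x: "continuous_on {0..1} (\<lambda>t::real. t * ln t)"
proof (rule continuous_on_eq_continuous_within[THEN iffD2], intro ballI)
  fix x :: real assume "x \<in> {0..1}"
  show "continuous (at x within {0..1}) (\<lambda>t. t * ln t)"
  proof (cases "x = 0")
    case True
    have "((\<lambda>t::real. t * ln t) \<longlongrightarrow> 0) (at_right 0)" by real_asymp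
    then show ?thesis
      using True by (simp add: continuous_within at_within_Icc_at_right)
  next
    case False
    then have "x > 0" using \<open>x \<in> {0..1}\<close> by simp
    then have "isCont (\<lambda>t. t * ln t) x" by (auto intro!: continuous_intros)
    then show ?thesis by (rule continuous_at_imp_continuous_within)
  qed
qed

lemma has_integral_ln:
  fixes a :: real
  assumes "0 \<le> a" "a \<le> 1"
  shows "(ln has_integral (a - a * ln a - 1)) {a..1}"
proof -
  define F where "F t = t * ln t - t" for t :: real
  have "(ln has_integral (F 1 - F a)) {a..1}"
  proof (rule fundamental_theorem_of_calculus_interior)
    show "continuous_on {a..1} F"
      unfolding F_def using assms
      by (intro continuous_intros continuous_on_subset[OF continuous_on_x_ln_x]) auto
    fix x assume "x \<in> {a<..<1}"
    then have "x > 0" using assms by auto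
    then have "(F has_real_derivative (ln x + x * (1 / x) - 1)) (at x)"
      unfolding F_def by (auto intro!: derivative_eq_intros)
    then show "(F has_vector_derivative ln x) (at x)"
      using \<open>x > 0\<close> by (simp add: has_real_derivative_iff_has_vector_derivative)
  qed (use assms in auto)
  then show ?thesis by (simp add: F_def algebra_simps)
qed

lemma has_integral_ln_one_minus:
  fixes b \<rho> :: real
  assumes "0 \<le> b" "b < 1" "\<rho> > 0"
  shows "((\<lambda>t. ln ((1 - t) * \<rho>)) has_integral (b * ln \<rho> - (1 - b) * ln (1 - b) - b)) {0..b}"
proof -
  define G where "G t = t * ln \<rho> - (1 - t) * ln (1 - t) - t" for t
  have "((\<lambda>t. ln ((1 - t) * \<rho>)) has_integral (G b - G 0)) {0..b}"
  proof (rule fundamental_theorem_of_calculus_interior)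
    show "continuous_on {0..b} G"
      unfolding G_def using assms by (intro continuous_intros) auto
    fix x assume "x \<in> {0<..<b}"
    then have "x < 1" using assms by auto
    then have "(G has_real_derivative (ln \<rho> - (- ln (1 - x) + (1 - x) * (- 1 / (1 - x))) - 1)) (at x)"
      unfolding G_def by (auto intro!: derivative_eq_intros)
    then show "(G has_vector_derivative ln ((1 - x) * \<rho>)) (at x)"
      using \<open>x < 1\<close> assms by (simp add: has_real_derivative_iff_has_vector_derivative ln_mult add.commute)
  qed (use assms in auto)
  then show ?thesis by (simp add: G_def)
qed

lemma has_integral_ln_max:
  fixes \<rho> :: real
  assumes "\<rho> \<ge> 0"
  shows "((\<lambda>t. ln (max t ((1 - t) * \<rho>))) has_integral (ln (1 + \<rho>) - 1)) {0<..<(1::real)}"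
proof (cases "\<rho> = 0")
  case True
  have "(ln has_integral (ln (1 + \<rho>) - 1)) {0<..<1}"
    using has_integral_ln[of 0] True unfolding has_integral_Icc_iff_Ioo by simp
  then show ?thesis by (rule has_integral_eq[rotated]) (simp add: True)
next
  case False
  then have "\<rho> > 0" using assms by simp
  define b where "b = \<rho> / (1 + \<rho>)"
  have b: "0 \<le> b" "b < 1" "1 - b = 1 / (1 + \<rho>)"
    using \<open>\<rho> > 0\<close> by (simp_all add: b_def divide_simps)
  have max_below: "max t ((1 - t) * \<rho>) = (1 - t) * \<rho>" if "t \<le> b" for t
  proof -
    have "t * (1 + \<rho>) \<le> \<rho>" using that \<open>\<rho> > 0\<close> by (simp add: b_def pos_le_divide_eq)
    then show ?thesis by (simp add: algebra_simps)
  qed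
  have max_above: "max t ((1 - t) * \<rho>) = t" if "b \<le> t" for t
  proof -
    have "\<rho> \<le> t * (1 + \<rho>)" using that \<open>\<rho> > 0\<close> by (simp add: b_def pos_divide_le_eq)
    then show ?thesis by (simp add: algebra_simps)
  qed
  have "((\<lambda>t. ln (max t ((1 - t) * \<rho>))) has_integral (b * ln \<rho> - (1 - b) * ln (1 - b) - b)) {0..b}"
    using has_integral_ln_one_minus[OF b(1,2) \<open>\<rho> > 0\<close>]
    by (rule has_integral_eq[rotated]) (simp add: max_below)
  moreover have "((\<lambda>t. ln (max t ((1 - t) * \<rho>))) has_integral (b - b * ln b - 1)) {b..1}"
    using has_integral_ln[OF b(1) less_imp_le[OF b(2)]]
    by (rule has_integral_eq[rotated]) (simp add: max_above)
  ultimately have combined: "((\<lambda>t. ln (max t ((1 - t) * \<rho>))) has_integral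
      (b * ln \<rho> - (1 - b) * ln (1 - b) - b) + (b - b * ln b - 1)) {0..1}"
    using b by (intro has_integral_combine) auto
  have ln_b: "ln b = ln \<rho> - ln (1 + \<rho>)" and ln_1b: "ln (1 - b) = - ln (1 + \<rho>)"
    using \<open>\<rho> > 0\<close> unfolding b(3) by (simp_all add: b_def ln_div)
  have integral_eq: "(b * ln \<rho> - (1 - b) * ln (1 - b) - b) + (b - b * ln b - 1) = ln (1 + \<rho>) - 1"
    unfolding ln_b ln_1b by (simp add: algebra_simps)
  show ?thesis
    using combined unfolding integral_eq has_integral_Icc_iff_Ioo .
qed

lemma has_integral_one_unit: "((\<lambda>t::real. 1::real) has_integral 1) {0<..<1}"
  using has_integral_const_real[of "1::real" 0 1] by (simp add: has_integral_Icc_iff_Ioo)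

lemma exp_integral_le_integral_exp:
  fixes f :: "real \<Rightarrow> real"
  assumes f: "(f has_integral M) {0<..<1}" and exp_f: "(\<lambda>t. exp (f t)) integrable_on {0<..<1}"
  shows "exp M \<le> integral {0<..<1} (\<lambda>t. exp (f t))"
proof -
  have lin: "((\<lambda>t. exp M * (1 + (f t - M * 1))) has_integral exp M * (1 + (M - M * 1))) {0<..<1}"
    by (intro has_integral_mult_right has_integral_add has_integral_diff has_integral_one_unit f)
  have tangent: "exp M * (1 + (f t - M * 1)) \<le> exp (f t)" for t
  proof -
    have "exp M * (1 + (f t - M)) \<le> exp M * exp (f t - M)"
      by (intro mult_left_mono exp_ge_add_one_self) auto
    then show ?thesis by (simp add: exp_diff)
  qed
  show ?thesis
    using has_integral_le[OF lin integrable_integral[OF exp_f] tangent] by simp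
qed

lemma integrable_prod_max:
  fixes \<rho> :: "'a \<Rightarrow> real"
  shows "(\<lambda>t. \<Prod>i\<in>I. max t ((1 - t) * \<rho> i)) integrable_on {0<..<1}"
proof -
  have "continuous_on {0..1} (\<lambda>t. \<Prod>i\<in>I. max t ((1 - t) * \<rho> i))"
    by (intro continuous_intros)
  then show ?thesis
    by (simp add: integrable_continuous_real flip: integrable_on_Icc_iff_Ioo)
qed

lemma exp_sum_le_integral_prod_max:
  fixes \<rho> :: "'a \<Rightarrow> real"
  assumes "finite I" "\<And>i. i \<in> I \<Longrightarrow> \<rho> i \<ge> 0"
  shows "exp (\<Sum>i\<in>I. ln (1 + \<rho> i) - 1) \<le> integral {0<..<1} (\<lambda>t. \<Prod>i\<in>I. max t ((1 - t) * \<rho> i))"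
proof -
  define L where "L t = (\<Sum>i\<in>I. ln (max t ((1 - t) * \<rho> i)))" for t
  have exp_L: "exp (L t) = (\<Prod>i\<in>I. max t ((1 - t) * \<rho> i))" if "t \<in> {0<..<1}" for t
  proof -
    have "max t ((1 - t) * \<rho> i) > 0" for i using that by auto
    then show ?thesis using assms(1) by (simp add: L_def exp_sum)
  qed
  have "(\<lambda>t. exp (L t)) integrable_on {0<..<1}"
    using integrable_prod_max
    by (rule integrable_spike_finite[of "{}", rotated 2]) (simp_all add: exp_L)
  moreover have "(L has_integral (\<Sum>i\<in>I. ln (1 + \<rho> i) - 1)) {0<..<1}"
    unfolding L_def using assms by (intro has_integral_sum has_integral_ln_max) auto
  ultimately have "exp (\<Sum>i\<in>I. ln (1 + \<rho> i) - 1) \<le> integral {0<..<1} (\<lambda>t. exp (L t))"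
    by (intro exp_integral_le_integral_exp)
  also have "\<dots> = integral {0<..<1} (\<lambda>t. \<Prod>i\<in>I. max t ((1 - t) * \<rho> i))"
    by (intro integral_cong exp_L)
  finally show ?thesis .
qed

lemma bw_norm_sq_has_integral:
  "((\<lambda>t. \<Sum>i\<le>degree P. (cmod (coeff P i))\<^sup>2 * (t ^ i * (1 - t) ^ (degree P - i))) has_integral
     bw_norm P ^ 2 / real (Suc (degree P))) {0<..<1}"
proof -
  define n where "n = degree P"
  have "((\<lambda>t. \<Sum>i\<le>n. (cmod (coeff P i))\<^sup>2 * (t ^ i * (1 - t) ^ (n - i))) has_integral
      (\<Sum>i\<le>n. (cmod (coeff P i))\<^sup>2 * (fact i * fact (n - i) / fact (Suc n)))) {0<..<1}"
    by (intro has_integral_sum has_integral_mult_right has_integral_beta_monomial) auto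
  moreover have "(\<Sum>i\<le>n. (cmod (coeff P i))\<^sup>2 * (fact i * fact (n - i) / fact (Suc n))) =
      bw_norm P ^ 2 / real (Suc n)"
    by (simp add: bw_norm_sq fock_inner_self n_def sum_divide_distrib algebra_simps)
  ultimately show ?thesis by (simp add: n_def)
qed

lemma prod_max_le_bernstein_sum:
  assumes "finite I" "0 < t" "t < 1"
  shows "(cmod c)\<^sup>2 * (\<Prod>i\<in>I. max t ((1 - t) * (cmod (x i))\<^sup>2)) \<le>
    (\<Sum>i\<le>card I. (cmod (coeff (smult c (\<Prod>i\<in>I. [:-x i, 1:])) i))\<^sup>2 * (t ^ i * (1 - t) ^ (card I - i)))"
proof -
  define s where "s = t / (1 - t)"
  define n where "n = card I"
  define P where "P = smult c (\<Prod>i\<in>I. [:-x i, 1:])"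
  have "s > 0" "(1 - t) * s = t"
    using assms by (simp_all add: s_def)
  have scale_prod: "(1 - t) ^ n * (\<Prod>i\<in>I. max s ((cmod (x i))\<^sup>2)) =
      (\<Prod>i\<in>I. max t ((1 - t) * (cmod (x i))\<^sup>2))"
  proof -
    have "(1 - t) ^ n * (\<Prod>i\<in>I. max s ((cmod (x i))\<^sup>2)) = (\<Prod>i\<in>I. (1 - t) * max s ((cmod (x i))\<^sup>2))"
      by (simp add: n_def prod.distrib)
    also have "\<dots> = (\<Prod>i\<in>I. max t ((1 - t) * (cmod (x i))\<^sup>2))"
      using assms \<open>(1 - t) * s = t\<close> by (intro prod.cong refl) (simp add: max_mult_distrib_left)
    finally show ?thesis .
  qed
  have scale_sum: "(1 - t) ^ n * (\<Sum>i\<le>n. (cmod (coeff P i))\<^sup>2 * s ^ i) =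
      (\<Sum>i\<le>n. (cmod (coeff P i))\<^sup>2 * (t ^ i * (1 - t) ^ (n - i)))"
    unfolding sum_distrib_left
  proof (intro sum.cong refl)
    fix i assume "i \<in> {..n}"
    then have "(1 - t) ^ n = (1 - t) ^ i * (1 - t) ^ (n - i)"
      by (simp flip: power_add)
    moreover have "(1 - t) ^ i * s ^ i = t ^ i"
      using \<open>(1 - t) * s = t\<close> by (simp flip: power_mult_distrib)
    ultimately show "(1 - t) ^ n * ((cmod (coeff P i))\<^sup>2 * s ^ i) =
        (cmod (coeff P i))\<^sup>2 * (t ^ i * (1 - t) ^ (n - i))"
      by (simp add: algebra_simps)
  qed
  have "(cmod c)\<^sup>2 * (\<Prod>i\<in>I. max t ((1 - t) * (cmod (x i))\<^sup>2)) =
      (1 - t) ^ n * ((cmod c)\<^sup>2 * (\<Prod>i\<in>I. max s ((cmod (x i))\<^sup>2)))"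
    unfolding scale_prod[symmetric] by (rule mult.left_commute)
  also have "\<dots> \<le> (1 - t) ^ n * (\<Sum>i\<le>n. (cmod (coeff P i))\<^sup>2 * s ^ i)"
    using lead_coeff_root_bound_le_weighted_norm[OF \<open>s > 0\<close> assms(1), of "[:c:]" n x] assms
    by (intro mult_left_mono) (simp_all add: Re_weighted_inner_self P_def n_def)
  also note scale_sum
  finally show ?thesis
    unfolding P_def n_def .
qed

lemma bw_norm_smult_prod_linear_ge:
  assumes "finite I" "c \<noteq> 0"
  shows "real (Suc (card I)) * exp (- real (card I)) * ((cmod c)\<^sup>2 * (\<Prod>i\<in>I. 1 + (cmod (x i))\<^sup>2))
    \<le> bw_norm (smult c (\<Prod>i\<in>I. [:-x i, 1:])) ^ 2"
proof -
  define P where "P = smult c (\<Prod>i\<in>I. [:-x i, 1:])"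
  define n where "n = card I"
  define \<phi> where "\<phi> = (\<lambda>t. \<Prod>i\<in>I. max t ((1 - t) * (cmod (x i))\<^sup>2))"
  have "degree P = n"
    using assms by (simp add: P_def n_def degree_prod_eq_sum_degree)
  have "exp (- real n) * (\<Prod>i\<in>I. 1 + (cmod (x i))\<^sup>2) = exp (\<Sum>i\<in>I. ln (1 + (cmod (x i))\<^sup>2) - 1)"
    using assms(1)
    by (simp add: n_def exp_sum exp_diff prod_dividef exp_minus field_simps add_pos_nonneg flip: exp_of_nat_mult)
  also have "\<dots> \<le> integral {0<..<1} \<phi>"
    unfolding \<phi>_def using assms(1) by (rule exp_sum_le_integral_prod_max) simp
  finally have "(cmod c)\<^sup>2 * (exp (- real n) * (\<Prod>i\<in>I. 1 + (cmod (x i))\<^sup>2)) \<le> (cmod c)\<^sup>2 * integral {0<..<1} \<phi>"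
    by (rule mult_left_mono) simp
  also have "\<dots> \<le> bw_norm P ^ 2 / real (Suc n)"
    using bw_norm_sq_has_integral[of P] integrable_prod_max[of "\<lambda>i. (cmod (x i))\<^sup>2"]
      prod_max_le_bernstein_sum[OF assms(1), of _ c x]
    unfolding \<open>degree P = n\<close>
    by (intro has_integral_le[OF has_integral_mult_right[OF integrable_integral]])
      (auto simp: \<phi>_def P_def n_def)
  finally show ?thesis
    by (simp add: P_def n_def field_simps)
qed

lemma bw_norm_prod_le_exp:
  fixes P :: "nat \<Rightarrow> complex poly"
  assumes "\<And>j. j < m \<Longrightarrow> P j \<noteq> 0"
  shows "(\<Prod>j<m. bw_norm (P j) ^ 2) \<le>
    exp (real (\<Sum>j<m. degree (P j))) / (real (\<Sum>j<m. degree (P j)) + 1) * bw_norm (\<Prod>j<m. P j) ^ 2"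
proof -
  have "\<forall>j. \<exists>x. P j = smult (lead_coeff (P j)) (\<Prod>i<degree (P j). [:-x i, 1:])"
    by (metis complex_poly_decompose')
  then obtain x where x: "\<And>j. P j = smult (lead_coeff (P j)) (\<Prod>i<degree (P j). [:-x j i, 1:])"
    by metis
  define c where "c = (\<Prod>j<m. lead_coeff (P j))"
  define I where "I = (SIGMA j:{..<m}. {..<degree (P j)})"
  define y where "y = (\<lambda>(j, i). x j i)"
  define n where "n = (\<Sum>j<m. degree (P j))"
  define K where "K = (cmod c)\<^sup>2 * (\<Prod>p\<in>I. 1 + (cmod (y p))\<^sup>2)"
  have "finite I" "card I = n" "c \<noteq> 0"
    using assms by (simp_all add: I_def n_def c_def card_SigmaI)
  have "bw_norm (P j) ^ 2 \<le> (cmod (lead_coeff (P j)))\<^sup>2 * (\<Prod>i<degree (P j). 1 + (cmod (x j i))\<^sup>2)" for j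
    using bw_norm_smult_prod_linear_le[of "{..<degree (P j)}" "lead_coeff (P j)" "x j"]
    unfolding x[symmetric] by simp
  then have "(\<Prod>j<m. bw_norm (P j) ^ 2) \<le>
      (\<Prod>j<m. (cmod (lead_coeff (P j)))\<^sup>2 * (\<Prod>i<degree (P j). 1 + (cmod (x j i))\<^sup>2))"
    by (intro prod_mono) simp
  also have "\<dots> = K"
    by (simp add: K_def c_def I_def y_def prod.distrib prod.Sigma split_def power_mult_distrib
        flip: prod_power_distrib prod_norm)
  finally have upper: "(\<Prod>j<m. bw_norm (P j) ^ 2) \<le> K" .
  have "(\<Prod>j<m. P j) = (\<Prod>j<m. smult (lead_coeff (P j)) (\<Prod>i<degree (P j). [:-x j i, 1:]))"
    by (subst x) simp
  also have "\<dots> = smult c (\<Prod>p\<in>I. [:-y p, 1:])"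
    by (simp add: c_def I_def y_def prod.distrib prod.Sigma split_def prod_smult)
  finally have "real (Suc n) * exp (- real n) * K \<le> bw_norm (\<Prod>j<m. P j) ^ 2"
    using bw_norm_smult_prod_linear_ge[OF \<open>finite I\<close> \<open>c \<noteq> 0\<close>, of y]
    by (simp add: K_def \<open>card I = n\<close>)
  then have "K \<le> bw_norm (\<Prod>j<m. P j) ^ 2 / (real (Suc n) * exp (- real n))"
    by (simp add: pos_le_divide_eq mult.commute)
  also have "\<dots> = exp (real n) / (real n + 1) * bw_norm (\<Prod>j<m. P j) ^ 2"
    by (simp add: exp_minus field_simps)
  finally show ?thesis
    using upper unfolding n_def by linarith
qed

lemma bw_norm_nonneg: "0 \<le> bw_norm P"
  unfolding bw_norm_def by (intro real_sqrt_ge_zero sum_nonneg) auto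

lemma le_sqrt_mult_if_sq_le:
  fixes y x a :: real
  assumes "0 \<le> x" "0 \<le> a" "y\<^sup>2 \<le> a * x\<^sup>2"
  shows "y \<le> sqrt a * x"
proof -
  have "y \<le> sqrt (y\<^sup>2)" by simp
  also have "\<dots> \<le> sqrt (a * x\<^sup>2)" using assms(3) by (rule real_sqrt_le_mono)
  also have "\<dots> = sqrt a * x" using assms(1) by (simp add: real_sqrt_mult)
  finally show ?thesis .
qed

theorem theorem5p1:
  fixes m :: nat and P :: "nat \<Rightarrow> complex poly"
  assumes "m \<ge> 1"
    and "\<And>j. j < m \<Longrightarrow> P j \<noteq> 0"
    and "\<And>j. j < m \<Longrightarrow> degree (P j) \<ge> 1"
  shows "(\<Prod>j<m. bw_norm (P j)) \<le>
    min (sqrt (fact (\<Sum>j<m. degree (P j)) / (\<Prod>j<m. fact (degree (P j)))))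
        (sqrt (exp (real (\<Sum>j<m. degree (P j))) / (real (\<Sum>j<m. degree (P j)) + 1)))
    * bw_norm (\<Prod>j<m. P j)"
proof -
  have sq: "(\<Prod>j<m. bw_norm (P j))\<^sup>2 = (\<Prod>j<m. bw_norm (P j) ^ 2)"
    by (simp add: prod_power_distrib)
  have "(\<Prod>j<m. bw_norm (P j)) \<le>
      sqrt (fact (\<Sum>j<m. degree (P j)) / (\<Prod>j<m. fact (degree (P j)))) * bw_norm (\<Prod>j<m. P j)"
    using bw_norm_prod_le_multinomial[of m P] assms(2)
    by (intro le_sqrt_mult_if_sq_le) (simp_all add: sq bw_norm_nonneg divide_nonneg_nonneg prod_nonneg)
  moreover have "(\<Prod>j<m. bw_norm (P j)) \<le>
      sqrt (exp (real (\<Sum>j<m. degree (P j))) / (real (\<Sum>j<m. degree (P j)) + 1)) * bw_norm (\<Prod>j<m. P j)"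
    using bw_norm_prod_le_exp[of m P] assms(2)
    by (intro le_sqrt_mult_if_sq_le) (simp_all add: sq bw_norm_nonneg divide_nonneg_nonneg sum_nonneg add_nonneg_nonneg)
  ultimately show ?thesis
    by (simp add: min_mult_distrib_right bw_norm_nonneg)
qed

end
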